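(* Let $G=(V,E)$ be a graph that is strongly reconstructible in $\mathbb{C}^d$, and suppose that a pair of vertices $u,v\in V$ is globally linked in $G$ in $\mathbb{C}^d$. Then $G'=G+uv$ is strongly reconstructible in $\mathbb{C}^d$. Moreover, if $G$ is fully reconstructible in $\mathbb{C}^d$, then so is $G'$.
   Context: $G+uv$ denotes the graph obtained from $G$ by adding the edge $uv$. For $p:V\to\mathbb{C}^d$, $m_{uv}(p)=\sum_{k=1}^d(p(u)_k-p(v)_k)^2$ (defined for any vertex pair); a framework is generic if its coordinates are algebraically independent over $\mathbb{Q}$; $(G,p),(G,q)$ are equivalent if $m_{e}(p)=m_e(q)$ for all edges $e$; $(G,p),(H,q)$ are length-equivalent under a bijection $\psi:E(G)\to E(H)$ if $m_e(p)=m_{\psi(e)}(q)$ for all $e\in E(G)$. A pair $\{u,v\}$ is globally linked in $G$ in $\mathbb{C}^d$ if for every generic $(G,p)$ in $\mathbb{C}^d$ and every equivalent $(G,q)$ in $\mathbb{C}^d$, $m_{uv}(p)=m_{uv}(q)$. A generic $(G,p)$ in $\mathbb{C}^d$ is strongly reconstructible if for every graph $H$ with the same number of vertices as $G$ and every generic $(H,q)$ in $\mathbb{C}^d$ length-equivalent to $(G,p)$ under some $\psi$, there is an isomorphism $\varphi:V(G)\to V(H)$ with $\psi(xy)=\varphi(x)\varphi(y)$ for all $xy\in E(G)$. Fully reconstructible is defined the same way for $G$ without isolated vertices, but with $H$ ranging over all graphs without isolated vertices (any number of vertices). A graph is strongly (fully) reconstructible in $\mathbb{C}^d$ if all its generic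 realizations in $\mathbb{C}^d$ are. *)

theory Defs
  imports Complex_Main "HOL-Library.Poly_Mapping"
begin

definition graph :: "'a set \<Rightarrow> 'a set set \<Rightarrow> bool" where
  "graph V E \<longleftrightarrow> finite V \<and> (\<forall>e\<in>E. \<exists>x y. x \<noteq> y \<and> x \<in> V \<and> y \<in> V \<and> e = {x, y})"

definition no_isolated :: "'a set \<Rightarrow> 'a set set \<Rightarrow> bool" where
  "no_isolated V E \<longleftrightarrow> (\<forall>x\<in>V. \<exists>e\<in>E. x \<in> e)"

text \<open>Realizations in C^d: p v k is the k-th coordinate (k < d) of vertex v.\<close>
definition m :: "nat \<Rightarrow> ('a \<Rightarrow> nat \<Rightarrow> complex) \<Rightarrow> 'a \<Rightarrow> 'a \<Rightarrow> complex" where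
  "m d p x y = (\<Sum>k<d. (p x k - p y k)^2)"

text \<open>Algebraic independence over Q of a family x indexed by I, via multivariate
  polynomials with rational coefficients (finitely supported maps from monomials).\<close>
definition mono_eval :: "('i \<Rightarrow>\<^sub>0 nat) \<Rightarrow> ('i \<Rightarrow> complex) \<Rightarrow> complex" where
  "mono_eval mn x = (\<Prod>i\<in>Poly_Mapping.keys mn. x i ^ Poly_Mapping.lookup mn i)"

definition poly_eval :: "(('i \<Rightarrow>\<^sub>0 nat) \<Rightarrow>\<^sub>0 rat) \<Rightarrow> ('i \<Rightarrow> complex) \<Rightarrow> complex" where
  "poly_eval P x = (\<Sum>mn\<in>Poly_Mapping.keys P. of_rat (Poly_Mapping.lookup P mn) * mono_eval mn x)"

definition alg_indep_Q :: "('i \<Rightarrow> complex) \<Rightarrow> 'i set \<Rightarrow> bool" where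
  "alg_indep_Q x I \<longleftrightarrow>
     (\<forall>P :: ('i \<Rightarrow>\<^sub>0 nat) \<Rightarrow>\<^sub>0 rat. (\<forall>mn\<in>Poly_Mapping.keys P. Poly_Mapping.keys mn \<subseteq> I) \<longrightarrow> poly_eval P x = 0 \<longrightarrow> P = 0)"

definition generic :: "nat \<Rightarrow> 'a set \<Rightarrow> ('a \<Rightarrow> nat \<Rightarrow> complex) \<Rightarrow> bool" where
  "generic d V p \<longleftrightarrow> alg_indep_Q (\<lambda>(v, k). p v k) (V \<times> {..<d})"

definition equivalent :: "nat \<Rightarrow> 'a set set \<Rightarrow> ('a \<Rightarrow> nat \<Rightarrow> complex) \<Rightarrow> ('a \<Rightarrow> nat \<Rightarrow> complex) \<Rightarrow> bool" where
  "equivalent d E p q \<longleftrightarrow> (\<forall>x y. {x, y} \<in> E \<longrightarrow> m d p x y = m d q x y)"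

definition globally_linked :: "nat \<Rightarrow> 'a set \<Rightarrow> 'a set set \<Rightarrow> 'a \<Rightarrow> 'a \<Rightarrow> bool" where
  "globally_linked d V E u v \<longleftrightarrow>
     (\<forall>p q. generic d V p \<longrightarrow> equivalent d E p q \<longrightarrow> m d p u v = m d q u v)"

definition length_equiv ::
  "nat \<Rightarrow> 'a set set \<Rightarrow> ('a \<Rightarrow> nat \<Rightarrow> complex) \<Rightarrow> 'b set set \<Rightarrow> ('b \<Rightarrow> nat \<Rightarrow> complex)
     \<Rightarrow> ('a set \<Rightarrow> 'b set) \<Rightarrow> bool" where
  "length_equiv d E p EH q \<psi> \<longleftrightarrow> bij_betw \<psi> E EH \<and>
     (\<forall>x y a b. {x, y} \<in> E \<longrightarrow> \<psi> {x, y} = {a, b} \<longrightarrow> m d p x y = m d q a b)"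

definition induces :: "'a set \<Rightarrow> 'a set set \<Rightarrow> 'b set \<Rightarrow> 'b set set \<Rightarrow> ('a set \<Rightarrow> 'b set) \<Rightarrow> bool" where
  "induces V E VH EH \<psi> \<longleftrightarrow> (\<exists>\<phi>. bij_betw \<phi> V VH \<and>
     (\<forall>x\<in>V. \<forall>y\<in>V. {x, y} \<in> E \<longleftrightarrow> {\<phi> x, \<phi> y} \<in> EH) \<and>
     (\<forall>x y. {x, y} \<in> E \<longrightarrow> \<psi> {x, y} = {\<phi> x, \<phi> y}))"

text \<open>Graphs H are taken with vertex type nat (every finite graph is isomorphic to one).\<close>
definition strongly_reconstructible_fw :: "nat \<Rightarrow> 'a set \<Rightarrow> 'a set set \<Rightarrow> ('a \<Rightarrow> nat \<Rightarrow> complex) \<Rightarrow> bool" where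
  "strongly_reconstructible_fw d V E p \<longleftrightarrow>
     (\<forall>(VH :: nat set) EH q \<psi>. graph VH EH \<longrightarrow> card VH = card V \<longrightarrow> generic d VH q \<longrightarrow>
        length_equiv d E p EH q \<psi> \<longrightarrow> induces V E VH EH \<psi>)"

definition fully_reconstructible_fw :: "nat \<Rightarrow> 'a set \<Rightarrow> 'a set set \<Rightarrow> ('a \<Rightarrow> nat \<Rightarrow> complex) \<Rightarrow> bool" where
  "fully_reconstructible_fw d V E p \<longleftrightarrow>
     (\<forall>(VH :: nat set) EH q \<psi>. graph VH EH \<longrightarrow> no_isolated VH EH \<longrightarrow> generic d VH q \<longrightarrow>
        length_equiv d E p EH q \<psi> \<longrightarrow> induces V E VH EH \<psi>)"

definition strongly_reconstructible :: "nat \<Rightarrow> 'a set \<Rightarrow> 'a set set \<Rightarrow> bool" where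
  "strongly_reconstructible d V E \<longleftrightarrow>
     (\<forall>p. generic d V p \<longrightarrow> strongly_reconstructible_fw d V E p)"

definition fully_reconstructible :: "nat \<Rightarrow> 'a set \<Rightarrow> 'a set set \<Rightarrow> bool" where
  "fully_reconstructible d V E \<longleftrightarrow> no_isolated V E \<and>
     (\<forall>p. generic d V p \<longrightarrow> fully_reconstructible_fw d V E p)"

end

theory Submission
  imports Defs
begin

(* Delete the image psi(uv) of the new edge from H: what remains is length-equivalent to
   (G, p), so reconstructibility of G yields a vertex bijection phi inducing psi on E.
   Then q o phi is equivalent to p, and global linkedness of uv gives phi(u) phi(v) the same
   length in q as the edge psi(uv). In a generic framework distinct vertex pairs have distinct
   squared lengths (their difference is a nonzero polynomial in the coordinates), hence
   psi(uv) = phi(u) phi(v). *)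

lemma mono_eval_superset:
  assumes "finite S" "Poly_Mapping.keys mn \<subseteq> S"
  shows "mono_eval mn x = (\<Prod>i\<in>S. x i ^ Poly_Mapping.lookup mn i)"
  unfolding mono_eval_def
  by (rule prod.mono_neutral_left) (auto simp: assms in_keys_iff)

lemma mono_eval_single: "mono_eval (Poly_Mapping.single i n) x = x i ^ n"
  by (subst mono_eval_superset[of "{i}"]) auto

lemma mono_eval_add: "mono_eval (mn + mn') x = mono_eval mn x * mono_eval mn' x"
proof -
  let ?S = "Poly_Mapping.keys mn \<union> Poly_Mapping.keys mn'"
  show ?thesis
    using keys_add[of mn mn']
    by (simp add: mono_eval_superset[of ?S] lookup_add power_add prod.distrib)
qed

lemma poly_eval_superset:
  assumes "finite S" "Poly_Mapping.keys P \<subseteq> S"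
  shows "poly_eval P x = (\<Sum>mn\<in>S. of_rat (Poly_Mapping.lookup P mn) * mono_eval mn x)"
  unfolding poly_eval_def
  by (rule sum.mono_neutral_left) (auto simp: assms in_keys_iff)

lemma poly_eval_add: "poly_eval (P + Q) x = poly_eval P x + poly_eval Q x"
proof -
  let ?S = "Poly_Mapping.keys P \<union> Poly_Mapping.keys Q"
  show ?thesis
    using keys_add[of P Q]
    by (simp add: poly_eval_superset[of ?S] lookup_add of_rat_add distrib_right sum.distrib)
qed

lemma poly_eval_uminus: "poly_eval (- P) x = - poly_eval P x"
  by (simp add: poly_eval_def of_rat_minus sum_negf)

lemma poly_eval_diff: "poly_eval (P - Q) x = poly_eval P x - poly_eval Q x"
  using poly_eval_add[of P "- Q" x] by (simp add: poly_eval_uminus)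

lemma poly_eval_single: "poly_eval (Poly_Mapping.single mn c) x = of_rat c * mono_eval mn x"
  by (simp add: poly_eval_def)

lemma poly_eval_sum: "poly_eval (\<Sum>k\<in>K. f k) x = (\<Sum>k\<in>K. poly_eval (f k) x)"
  by (induction K rule: infinite_finite_induct) (simp_all add: poly_eval_add poly_eval_def[of 0])

definition sq_diff_poly :: "'i \<Rightarrow> 'i \<Rightarrow> ('i \<Rightarrow>\<^sub>0 nat) \<Rightarrow>\<^sub>0 rat" where
  "sq_diff_poly i j =
     Poly_Mapping.single (Poly_Mapping.single i 2) 1
     + Poly_Mapping.single (Poly_Mapping.single i 1 + Poly_Mapping.single j 1) (-2)
     + Poly_Mapping.single (Poly_Mapping.single j 2) 1"

lemma poly_eval_sq_diff_poly: "poly_eval (sq_diff_poly i j) x = (x i - x j)\<^sup>2"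
  by (simp add: sq_diff_poly_def poly_eval_add poly_eval_single mono_eval_single mono_eval_add
      of_rat_minus power2_diff)

lemma keys_sq_diff_poly:
  "mn \<in> Poly_Mapping.keys (sq_diff_poly i j) \<Longrightarrow> Poly_Mapping.keys mn \<subseteq> {i, j}"
  unfolding sq_diff_poly_def
  by (auto dest!: keys_add[THEN subsetD] split: if_splits)

definition sqdist_poly :: "nat \<Rightarrow> 'a \<Rightarrow> 'a \<Rightarrow> (('a \<times> nat) \<Rightarrow>\<^sub>0 nat) \<Rightarrow>\<^sub>0 rat" where
  "sqdist_poly d a b = (\<Sum>k<d. sq_diff_poly (a, k) (b, k))"

lemma poly_eval_sqdist_poly: "poly_eval (sqdist_poly d a b) (\<lambda>(v, k). p v k) = m d p a b"
  by (simp add: sqdist_poly_def poly_eval_sum poly_eval_sq_diff_poly m_def)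

lemma keys_sqdist_poly:
  "mn \<in> Poly_Mapping.keys (sqdist_poly d a b) \<Longrightarrow> Poly_Mapping.keys mn \<subseteq> {a, b} \<times> {..<d}"
  unfolding sqdist_poly_def
  by (fastforce dest!: keys_sum[THEN subsetD] keys_sq_diff_poly)

lemma m_sym: "m d p x y = m d p y x"
  unfolding m_def by (simp add: power2_commute)

lemma generic_mono: "generic d V q \<Longrightarrow> W \<subseteq> V \<Longrightarrow> generic d W q"
  unfolding generic_def alg_indep_Q_def by (meson order_trans Sigma_mono order_refl)

lemma generic_m_neq:
  assumes "d \<ge> 1" and "generic d V q" and "a \<in> V" "b \<in> V" "c \<in> V" "e \<in> V"
    and "a \<noteq> b" "a \<notin> {c, e}"
  shows "m d q a b \<noteq> m d q c e"
proof
  assume eq: "m d q a b = m d q c e"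
  define P where "P = sqdist_poly d a b - sqdist_poly d c e"
  have "\<forall>mn\<in>Poly_Mapping.keys P. Poly_Mapping.keys mn \<subseteq> V \<times> {..<d}"
    using assms(3-6) unfolding P_def by (fastforce dest!: keys_diff[THEN subsetD] keys_sqdist_poly)
  moreover have "poly_eval P (\<lambda>(v, k). q v k) = 0"
    by (simp add: P_def poly_eval_diff poly_eval_sqdist_poly eq)
  ultimately have "P = 0"
    using \<open>generic d V q\<close> unfolding generic_def alg_indep_Q_def by blast
  define y :: "'a \<Rightarrow> nat \<Rightarrow> complex" where "y v k = (if v = a \<and> k = 0 then 1 else 0)" for v k
  have "m d y a b = (\<Sum>k<d. if k = 0 then 1 else 0)"
    unfolding m_def y_def using \<open>a \<noteq> b\<close> by (intro sum.cong) auto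
  also have "\<dots> = 1"
    using \<open>d \<ge> 1\<close> by simp
  finally have "m d y a b = 1" .
  moreover have "m d y c e = 0"
    using \<open>a \<notin> {c, e}\<close> by (auto simp: m_def y_def)
  ultimately have "poly_eval P (\<lambda>(v, k). y v k) = 1"
    by (simp add: P_def poly_eval_diff poly_eval_sqdist_poly)
  with \<open>P = 0\<close> show False
    by (simp add: poly_eval_def)
qed

lemma generic_m_eq_imp_doubleton_eq:
  assumes "d \<ge> 1" and "generic d V q" and "a \<in> V" "b \<in> V" "c \<in> V" "e \<in> V"
    and "a \<noteq> b" and "m d q a b = m d q c e"
  shows "{a, b} = {c, e}"
proof (rule ccontr)
  assume "{a, b} \<noteq> {c, e}"
  then consider "a \<notin> {c, e}" | "b \<notin> {c, e}"
    using \<open>a \<noteq> b\<close> by blast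
  then show False
  proof cases
    case 1
    then show False using generic_m_neq[OF assms(1-7)] assms(8) by blast
  next
    case 2
    then show False
      using generic_m_neq[OF assms(1,2,4,3,5,6)] assms(7,8) m_sym[of d q a b] by auto
  qed
qed

lemma graph_subset: "graph V F \<Longrightarrow> F' \<subseteq> F \<Longrightarrow> graph V F'"
  unfolding graph_def by (meson subsetD)

lemma Union_edges_subset: "graph V F \<Longrightarrow> \<Union>F \<subseteq> V"
  unfolding graph_def by fastforce

lemma graph_Union_edges:
  assumes "graph V F"
  shows "graph (\<Union>F) F"
  unfolding graph_def
proof (intro conjI ballI)
  show "finite (\<Union>F)"
    using finite_subset[OF Union_edges_subset[OF assms]] assms unfolding graph_def by blast
next
  fix e assume "e \<in> F"
  then obtain x y where "x \<noteq> y" "e = {x, y}"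
    using assms unfolding graph_def by blast
  with \<open>e \<in> F\<close> show "\<exists>x y. x \<noteq> y \<and> x \<in> \<Union>F \<and> y \<in> \<Union>F \<and> e = {x, y}"
    by blast
qed

lemma length_equiv_remove_edge:
  assumes "length_equiv d (E \<union> {e}) p F q \<psi>" and "e \<notin> E"
  shows "length_equiv d E p (F - {\<psi> e}) q \<psi>"
proof -
  have bij: "bij_betw \<psi> (E \<union> {e}) F"
    using assms(1) unfolding length_equiv_def by blast
  then have "bij_betw \<psi> ((E \<union> {e}) - {e}) (F - {\<psi> e})"
    by (rule bij_betw_DiffI) (auto intro: bij_betw_apply[OF bij])
  with assms show ?thesis
    unfolding length_equiv_def by (simp add: insert_absorb)
qed

lemma induces_edges_subset:
  assumes "graph V E" and "induces V E W F \<psi>" and "\<psi> ` E = F"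
  shows "\<Union>F \<subseteq> W"
proof -
  obtain \<phi> where "bij_betw \<phi> V W" and "\<forall>x y. {x, y} \<in> E \<longrightarrow> \<psi> {x, y} = {\<phi> x, \<phi> y}"
    using assms(2) unfolding induces_def by blast
  with assms(1,3) show ?thesis
    unfolding graph_def by (force dest: bij_betw_apply)
qed

lemma induces_insert_edge:
  assumes "bij_betw \<phi> V W"
    and adj: "\<forall>x\<in>V. \<forall>y\<in>V. {x, y} \<in> E \<longleftrightarrow> {\<phi> x, \<phi> y} \<in> F - {\<psi> {u, v}}"
    and edges: "\<forall>x y. {x, y} \<in> E \<longrightarrow> \<psi> {x, y} = {\<phi> x, \<phi> y}"
    and "u \<in> V" "v \<in> V" and "\<psi> {u, v} \<in> F" and new_edge: "\<psi> {u, v} = {\<phi> u, \<phi> v}"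
  shows "induces V (E \<union> {{u, v}}) W F \<psi>"
  unfolding induces_def
proof (intro exI conjI ballI allI impI)
  show "bij_betw \<phi> V W" by fact
next
  fix x y assume "x \<in> V" "y \<in> V"
  have "{\<phi> x, \<phi> y} = \<psi> {u, v} \<longleftrightarrow> {x, y} = {u, v}"
    using inj_on_image_eq_iff[of \<phi> V "{x, y}" "{u, v}"] bij_betw_imp_inj_on[OF assms(1)]
      \<open>x \<in> V\<close> \<open>y \<in> V\<close> \<open>u \<in> V\<close> \<open>v \<in> V\<close> new_edge
    by simp
  moreover have "{x, y} \<in> E \<longleftrightarrow> {\<phi> x, \<phi> y} \<in> F - {\<psi> {u, v}}"
    using adj \<open>x \<in> V\<close> \<open>y \<in> V\<close> by blast
  ultimately show "{x, y} \<in> E \<union> {{u, v}} \<longleftrightarrow> {\<phi> x, \<phi> y} \<in> F"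
    using \<open>\<psi> {u, v} \<in> F\<close> by (cases "{x, y} = {u, v}") auto
next
  fix x y assume "{x, y} \<in> E \<union> {{u, v}}"
  then consider "{x, y} \<in> E" | "x = u" "y = v" | "x = v" "y = u"
    by (auto simp: doubleton_eq_iff)
  then show "\<psi> {x, y} = {\<phi> x, \<phi> y}"
  proof cases
    case 1
    with edges show ?thesis by blast
  next
    case 2
    with new_edge show ?thesis by simp
  next
    case 3
    with new_edge show ?thesis by (simp add: insert_commute)
  qed
qed

lemma globally_linked_edge_image:
  assumes "d \<ge> 1" and "globally_linked d V E u v" and "generic d V p" and "generic d VH q"
    and "graph VH F" and "length_equiv d (E \<union> {{u, v}}) p F q \<psi>"
    and "inj_on \<phi> V" "\<phi> ` V \<subseteq> VH" and "\<forall>x y. {x, y} \<in> E \<longrightarrow> \<psi> {x, y} = {\<phi> x, \<phi> y}"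
    and "u \<in> V" "v \<in> V"
  shows "\<psi> {u, v} = {\<phi> u, \<phi> v}"
proof -
  have lengths: "m d p x y = m d q a b" if "{x, y} \<in> E \<union> {{u, v}}" "\<psi> {x, y} = {a, b}" for x y a b
    using assms(6) that unfolding length_equiv_def by blast
  have "\<psi> {u, v} \<in> F"
    using assms(6) unfolding length_equiv_def by (auto dest: bij_betw_apply)
  then obtain a b where ab: "\<psi> {u, v} = {a, b}" "a \<in> VH" "b \<in> VH" "a \<noteq> b"
    using assms(5) unfolding graph_def by blast
  have pullback: "m d (\<lambda>x. q (\<phi> x)) x y = m d q (\<phi> x) (\<phi> y)" for x y
    by (simp add: m_def)
  then have "equivalent d E p (\<lambda>x. q (\<phi> x))"
    unfolding equivalent_def using lengths assms(9) by simp
  then have "m d p u v = m d q (\<phi> u) (\<phi> v)"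
    using assms(2,3) pullback unfolding globally_linked_def by metis
  also have "m d p u v = m d q a b"
    using lengths ab(1) by blast
  finally have "{a, b} = {\<phi> u, \<phi> v}"
    using generic_m_eq_imp_doubleton_eq[OF assms(1,4) ab(2,3)] ab(4) assms(8,10,11) by blast
  with ab(1) show ?thesis by simp
qed

lemma induces_insert_globally_linked:
  assumes "d \<ge> 1" and "globally_linked d V E u v" and "generic d V p" and "generic d VH q"
    and "graph VH F" and "length_equiv d (E \<union> {{u, v}}) p F q \<psi>"
    and "W \<subseteq> VH" and "induces V E W (F - {\<psi> {u, v}}) \<psi>"
    and "u \<in> V" "v \<in> V"
  shows "induces V (E \<union> {{u, v}}) W F \<psi>"
proof -
  obtain \<phi> where bij: "bij_betw \<phi> V W"
    and adj: "\<forall>x\<in>V. \<forall>y\<in>V. {x, y} \<in> E \<longleftrightarrow> {\<phi> x, \<phi> y} \<in> F - {\<psi> {u, v}}"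
    and edges: "\<forall>x y. {x, y} \<in> E \<longrightarrow> \<psi> {x, y} = {\<phi> x, \<phi> y}"
    using assms(8) unfolding induces_def by blast
  have "\<psi> {u, v} = {\<phi> u, \<phi> v}"
    using globally_linked_edge_image[OF assms(1-6) _ _ edges assms(9,10)] bij assms(7)
    by (auto simp: bij_betw_def)
  moreover have "\<psi> {u, v} \<in> F"
    using assms(6) unfolding length_equiv_def by (auto dest: bij_betw_apply)
  ultimately show ?thesis
    using induces_insert_edge[OF bij adj edges assms(9,10)] by blast
qed

lemma strongly_reconstructible_fw_insert_globally_linked:
  assumes "d \<ge> 1" and "globally_linked d V E u v" and "generic d V p"
    and "strongly_reconstructible_fw d V E p"
    and "u \<in> V" "v \<in> V" and "{u, v} \<notin> E"
  shows "strongly_reconstructible_fw d V (E \<union> {{u, v}}) p"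
  unfolding strongly_reconstructible_fw_def
proof (intro allI impI)
  fix VH :: "nat set" and F q \<psi>
  assume "graph VH F" "card VH = card V" "generic d VH q"
    and equiv: "length_equiv d (E \<union> {{u, v}}) p F q \<psi>"
  moreover have "induces V E VH (F - {\<psi> {u, v}}) \<psi>"
    using assms(4) \<open>graph VH F\<close> \<open>card VH = card V\<close> \<open>generic d VH q\<close>
      length_equiv_remove_edge[OF equiv assms(7)]
    unfolding strongly_reconstructible_fw_def by (blast intro: graph_subset)
  ultimately show "induces V (E \<union> {{u, v}}) VH F \<psi>"
    using induces_insert_globally_linked[OF assms(1-3)] assms(5,6) by blast
qed

lemma fully_reconstructible_fw_insert_globally_linked:
  assumes "d \<ge> 1" and "globally_linked d V E u v" and "generic d V p" and "graph V E"
    and "fully_reconstructible_fw d V E p"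
    and "u \<in> V" "v \<in> V" "u \<noteq> v" and "{u, v} \<notin> E"
  shows "fully_reconstructible_fw d V (E \<union> {{u, v}}) p"
  unfolding fully_reconstructible_fw_def
proof (intro allI impI)
  fix VH :: "nat set" and F q \<psi>
  assume "graph VH F" "no_isolated VH F" "generic d VH q"
    and equiv: "length_equiv d (E \<union> {{u, v}}) p F q \<psi>"
  \<comment> \<open>Deleting \<open>\<psi> {u, v}\<close> may isolate vertices, so G is reconstructed on the vertices covered by \<open>F'\<close>.\<close>
  define F' where "F' = F - {\<psi> {u, v}}"
  have "graph (\<Union>F') F'"
    using graph_Union_edges graph_subset \<open>graph VH F\<close> unfolding F'_def by blast
  moreover have "no_isolated (\<Union>F') F'"
    unfolding no_isolated_def by blast
  moreover have "\<Union>F' \<subseteq> VH"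
    using Union_edges_subset \<open>graph VH F\<close> unfolding F'_def by blast
  moreover have "generic d (\<Union>F') q"
    using generic_mono \<open>generic d VH q\<close> calculation(3) by blast
  ultimately have "induces V E (\<Union>F') F' \<psi>"
    using assms(5) length_equiv_remove_edge[OF equiv assms(9)]
    unfolding fully_reconstructible_fw_def F'_def by blast
  then have induced: "induces V (E \<union> {{u, v}}) (\<Union>F') F \<psi>"
    using induces_insert_globally_linked[OF assms(1-3) \<open>generic d VH q\<close> \<open>graph VH F\<close> equiv
        \<open>\<Union>F' \<subseteq> VH\<close>] assms(6,7)
    unfolding F'_def by blast
  have "graph V (E \<union> {{u, v}})"
    using assms(4,6-8) unfolding graph_def by blast
  moreover have "\<psi> ` (E \<union> {{u, v}}) = F"
    using equiv unfolding length_equiv_def bij_betw_def by blast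
  ultimately have "\<Union>F \<subseteq> \<Union>F'"
    using induces_edges_subset induced by blast
  moreover have "VH \<subseteq> \<Union>F"
    using \<open>no_isolated VH F\<close> unfolding no_isolated_def by blast
  ultimately have "\<Union>F' = VH"
    using \<open>\<Union>F' \<subseteq> VH\<close> by blast
  with induced show "induces V (E \<union> {{u, v}}) VH F \<psi>"
    by simp
qed

theorem lemma4p10:
  fixes V :: "'a set" and E :: "'a set set" and u v :: 'a and d :: nat
  assumes "d \<ge> 1"
    and "graph V E"
    and "u \<in> V" and "v \<in> V" and "u \<noteq> v"
    and "strongly_reconstructible d V E"
    and "globally_linked d V E u v"
  shows "strongly_reconstructible d V (E \<union> {{u, v}}) \<and>
         (fully_reconstructible d V E \<longrightarrow> fully_reconstructible d V (E \<union> {{u, v}}))"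
proof (cases "{u, v} \<in> E")
  case True
  then have "E \<union> {{u, v}} = E" by blast
  with assms(6) show ?thesis by simp
next
  case False
  have "strongly_reconstructible_fw d V (E \<union> {{u, v}}) p" if "generic d V p" for p
    using strongly_reconstructible_fw_insert_globally_linked[OF assms(1,7) that _ assms(3,4) False]
      assms(6) that
    unfolding strongly_reconstructible_def by blast
  moreover have "fully_reconstructible_fw d V (E \<union> {{u, v}}) p"
    if "fully_reconstructible d V E" "generic d V p" for p
    using fully_reconstructible_fw_insert_globally_linked[OF assms(1,7) that(2) assms(2) _ assms(3-5) False]
      that
    unfolding fully_reconstructible_def by blast
  moreover have "no_isolated V E \<Longrightarrow> no_isolated V (E \<union> {{u, v}})"
    unfolding no_isolated_def by blast
  ultimately show ?thesis
    unfolding strongly_reconstructible_def fully_reconstructible_def by blast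
qed

end
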